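(* Let $P$ be a finite set of real numbers with $0\in P$, and let $a=(a_n)$ be a sequence of real numbers such that $\sum_n a_n$ is absolutely convergent and $|a_n|\ge|a_{n+1}|>0$ for all $n\in\mathbb N$. Then there exists a sequence $((x_n,y_n))_n$ in $\mathbb R^2$ with $\sum_n(|x_n|+|y_n|)<\infty$ such that $E(x_n,y_n)_0=S(P,a)$.
   Context: For an absolutely convergent series $\sum_n v_n$ in $\mathbb R^2$, its achievement set is $E(v_n)=\{\sum_{n=1}^\infty \varepsilon_n v_n : (\varepsilon_n)\in\{0,1\}^{\mathbb N}\}$; $E(x_n,y_n)$ denotes the achievement set of $((x_n,y_n))_n$. For $A\subset\mathbb R^2$ and $c\in\mathbb R$, $A_c=\{s\in\mathbb R:(s,c)\in A\}$. The set of $P$-sums is $S(P,a)=\{\sum_{n=1}^\infty \varepsilon_n a_n : (\varepsilon_n)\in P^{\mathbb N}\}$. *)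

theory Defs
  imports "HOL-Analysis.Analysis"
begin

definition achievement_set :: "(nat \<Rightarrow> real \<times> real) \<Rightarrow> (real \<times> real) set" where
  "achievement_set v = {(\<Sum>n. \<epsilon> n *\<^sub>R v n) | \<epsilon>. \<forall>n. \<epsilon> n \<in> {0, 1}}"

definition section_at :: "(real \<times> real) set \<Rightarrow> real \<Rightarrow> real set" where
  "section_at A c = {s. (s, c) \<in> A}"

definition P_sums :: "real set \<Rightarrow> (nat \<Rightarrow> real) \<Rightarrow> real set" where
  "P_sums P a = {(\<Sum>n. \<epsilon> n * a n) | \<epsilon>. \<forall>n. \<epsilon> n \<in> P}"

end

theory Submission
  imports Defs
begin

text \<open>Write P - {0} = {p_0, ..., p_(m-1)} and replace each term a_n by a block of m + 1 vectors:
  (p_j a_n, r^n) for j < m, and (0, -r^n), where r = 1/(m + 3). A 0/1 selection contributes c_n r^n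
  to the second coordinate from block n, with an integer c_n between -1 and m; as r is small, a
  vanishing second coordinate forces every c_n = 0, i.e. each block selects either nothing or a
  single vector (p_j a_n, r^n) together with (0, -r^n). Hence the points of the achievement set on
  the horizontal axis are exactly the P-sums.\<close>

lemma sums_Pair:
  fixes f g :: "nat \<Rightarrow> 'a::real_normed_vector"
  assumes "f sums s" and "g sums t"
  shows "(\<lambda>n. (f n, g n)) sums (s, t)"
  using tendsto_Pair[OF assms[unfolded sums_def]] by (simp add: sums_def sum_prod)

lemma sum_lessThan_mult_comp_div:
  fixes g :: "nat \<Rightarrow> 'a::comm_semiring_1"
  assumes "0 < k"
  shows "(\<Sum>N<n * k. g (N div k)) = of_nat k * (\<Sum>i<n. g i)"
proof -
  have block: "(\<Sum>N\<in>{i * k..<i * k + k}. g (N div k)) = of_nat k * g i" for i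
  proof -
    have "N div k = i" if "N \<in> {i * k..<i * k + k}" for N
      using that by (intro div_nat_eqI) (auto simp: mult.commute)
    then show ?thesis by simp
  qed
  have "(\<Sum>N<n * k. g (N div k)) = (\<Sum>i<n. \<Sum>N\<in>{i * k..<i * k + k}. g (N div k))"
    by (rule sum.nat_group[symmetric])
  also have "\<dots> = of_nat k * (\<Sum>i<n. g i)"
    by (simp add: block sum_distrib_left)
  finally show ?thesis .
qed

lemma summable_comp_div:
  fixes g :: "nat \<Rightarrow> real"
  assumes "0 < k" and "summable g" and "\<And>n. 0 \<le> g n"
  shows "summable (\<lambda>N. g (N div k))"
proof (rule bounded_imp_summable)
  fix n
  have "n < Suc n * k"
    using assms(1) by (cases k) auto
  then have "(\<Sum>N\<le>n. g (N div k)) \<le> (\<Sum>N<Suc n * k. g (N div k))"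
    using assms(3) by (intro sum_mono2) auto
  also have "\<dots> = of_nat k * (\<Sum>i<Suc n. g i)"
    by (rule sum_lessThan_mult_comp_div[OF assms(1)])
  also have "\<dots> \<le> of_nat k * suminf g"
    using assms by (intro mult_left_mono sum_le_suminf) auto
  finally show "(\<Sum>N\<le>n. g (N div k)) \<le> of_nat k * suminf g" .
qed (use assms(3) in auto)

lemma int_coeffs_eq_0_if_sums_zero:
  fixes c :: "nat \<Rightarrow> real" and r M :: real
  assumes int: "\<And>n. c n \<in> \<int>" and bound: "\<And>n. \<bar>c n\<bar> \<le> M"
    and sums0: "(\<lambda>n. c n * r ^ n) sums 0" and r: "0 < r" "M * r < 1 - r"
  shows "c n = 0"
proof (rule ccontr)
  assume "c n \<noteq> 0"
  define k where "k = (LEAST k. c k \<noteq> 0)"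
  have ck: "c k \<noteq> 0" and below: "\<And>i. i < k \<Longrightarrow> c i = 0"
    using LeastI[of "\<lambda>k. c k \<noteq> 0", OF \<open>c n \<noteq> 0\<close>] not_less_Least[of _ "\<lambda>k. c k \<noteq> 0"]
    unfolding k_def by blast+
  have "0 \<le> M * r" using bound[of 0] r by simp
  then have r1: "r < 1" using r by linarith
  have "(\<lambda>i. c (i + Suc k) * r ^ (i + Suc k)) sums (- (\<Sum>i<Suc k. c i * r ^ i))"
    using sums_split_initial_segment[OF sums0, of "Suc k"] by simp
  also have "(\<Sum>i<Suc k. c i * r ^ i) = c k * r ^ k"
    using below by (simp add: sum.lessThan_Suc)
  finally have tail: "(\<lambda>i. c (i + Suc k) * r ^ (i + Suc k)) sums (- (c k * r ^ k))" .
  have geom: "(\<lambda>i. M * r ^ Suc k * r ^ i) sums (M * r ^ Suc k / (1 - r))"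
    using sums_mult[OF geometric_sums, of r "M * r ^ Suc k"] r r1 by simp
  have "r ^ k \<le> \<bar>c k\<bar> * r ^ k"
    using Ints_nonzero_abs_ge1[OF int ck] r by simp
  also have "\<dots> = norm (\<Sum>i. c (i + Suc k) * r ^ (i + Suc k))"
    unfolding sums_unique[OF tail, symmetric] using r by (simp add: abs_mult)
  also have "\<dots> \<le> (\<Sum>i. M * r ^ Suc k * r ^ i)"
  proof (rule norm_suminf_le)
    show "norm (c (i + Suc k) * r ^ (i + Suc k)) \<le> M * r ^ Suc k * r ^ i" for i
      using bound[of "i + Suc k"] r by (simp add: abs_mult power_add mult_right_mono)
  qed (use geom in \<open>rule sums_summable\<close>)
  also have "\<dots> = M * r ^ Suc k / (1 - r)"
    by (rule sums_unique[OF geom, symmetric])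
  also have "\<dots> = r ^ k * (M * r / (1 - r))"
    by (simp add: mult_ac)
  also have "\<dots> < r ^ k"
    using r r1 by (simp add: divide_simps)
  finally show False by simp
qed

lemma sum_select_at_most_one:
  fixes e p :: "'a \<Rightarrow> real"
  assumes "finite A" and "\<And>j. j \<in> A \<Longrightarrow> e j \<in> {0, 1}" and "sum e A \<le> 1"
  shows "(\<Sum>j\<in>A. e j * p j) \<in> insert 0 (p ` A)"
proof (cases "\<exists>j0\<in>A. e j0 = 1")
  case False
  then have "\<forall>j\<in>A. e j = 0" using assms(2) by blast
  then show ?thesis by simp
next
  case True
  then obtain j0 where j0: "j0 \<in> A" "e j0 = 1" by blast
  have "sum e (A - {j0}) = 0"
    using sum.remove[OF assms(1) j0(1), of e] assms j0 sum_nonneg[of "A - {j0}" e] by force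
  then have "\<forall>j\<in>A - {j0}. e j = 0"
    using assms by (subst (asm) sum_nonneg_eq_0_iff) force+
  then have "(\<Sum>j\<in>A. e j * p j) = p j0"
    using sum.remove[OF assms(1) j0(1), of "\<lambda>j. e j * p j"] j0 by simp
  then show ?thesis using j0 by simp
qed

locale P_sums_encoding =
  fixes ps :: "real list" and a :: "nat \<Rightarrow> real"
  assumes distinct_ps: "distinct ps" and zero_notin_ps: "0 \<notin> set ps"
    and summable_abs_a: "summable (\<lambda>n. \<bar>a n\<bar>)"
begin

abbreviation m :: nat where "m \<equiv> length ps"

definition r :: real where "r = 1 / (real m + 3)"

definition x :: "nat \<Rightarrow> real" where
  "x N = (if N mod Suc m < m then ps ! (N mod Suc m) * a (N div Suc m) else 0)"

definition y :: "nat \<Rightarrow> real" where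
  "y N = (if N mod Suc m < m then r ^ (N div Suc m) else - (r ^ (N div Suc m)))"

definition block_value :: "(nat \<Rightarrow> real) \<Rightarrow> nat \<Rightarrow> real" where
  "block_value e n = (\<Sum>j<m. e (n * Suc m + j) * ps ! j)"

definition block_balance :: "(nat \<Rightarrow> real) \<Rightarrow> nat \<Rightarrow> real" where
  "block_balance e n = (\<Sum>j<m. e (n * Suc m + j)) - e (n * Suc m + m)"

lemma r_pos: "0 < r"
  by (simp add: r_def)

lemma nth_ps_neq_0: "j < m \<Longrightarrow> ps ! j \<noteq> 0"
  using zero_notin_ps nth_mem by metis

lemma mod_block [simp]: "j \<le> m \<Longrightarrow> (n * Suc m + j) mod Suc m = j"
  and div_block [simp]: "j \<le> m \<Longrightarrow> (n * Suc m + j) div Suc m = n"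
  by (simp_all del: mult_Suc_right)

lemma summable_abs_xy: "summable (\<lambda>N. \<bar>x N\<bar> + \<bar>y N\<bar>)"
proof -
  define C where "C = Max (insert 0 (abs ` set ps))"
  have C: "0 \<le> C" "\<And>j. j < m \<Longrightarrow> \<bar>ps ! j\<bar> \<le> C"
    unfolding C_def by (auto intro: Max_ge)
  define g where "g n = C * \<bar>a n\<bar> + r ^ n" for n
  have "summable g"
    unfolding g_def using summable_abs_a r_pos r_def
    by (intro summable_add summable_mult summable_geometric) auto
  then have "summable (\<lambda>N. g (N div Suc m))"
    by (rule summable_comp_div[OF zero_less_Suc]) (use C r_pos in \<open>auto simp: g_def\<close>)
  then show ?thesis
  proof (rule summable_comparison_test')
    show "norm (\<bar>x N\<bar> + \<bar>y N\<bar>) \<le> g (N div Suc m)" for N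
      using C(1) C(2)[of "N mod Suc m"] r_pos
      by (auto simp: x_def y_def g_def abs_mult intro: mult_right_mono)
  qed
qed

lemma x_block: "j < m \<Longrightarrow> x (n * Suc m + j) = ps ! j * a n" "x (n * Suc m + m) = 0"
  by (simp_all add: x_def del: mult_Suc_right)

lemma y_block: "j < m \<Longrightarrow> y (n * Suc m + j) = r ^ n" "y (n * Suc m + m) = - (r ^ n)"
  by (simp_all add: y_def del: mult_Suc_right)

lemma sum_block:
  "(\<Sum>N\<in>{n * Suc m..<n * Suc m + Suc m}. f N) = (\<Sum>j<m. f (n * Suc m + j)) + f (n * Suc m + m)"
  by (simp add: sum.atLeastLessThan_shift_0[of f] atLeast0LessThan del: mult_Suc_right)

lemma selection_sums:
  assumes "\<And>N. \<bar>e N\<bar> \<le> 1"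
  shows "(\<lambda>N. e N *\<^sub>R (x N, y N)) sums (\<Sum>N. e N * x N, \<Sum>N. e N * y N)"
    and "(\<lambda>n. block_value e n * a n) sums (\<Sum>N. e N * x N)"
    and "(\<lambda>n. block_balance e n * r ^ n) sums (\<Sum>N. e N * y N)"
proof -
  have "\<bar>e N * x N\<bar> \<le> \<bar>x N\<bar> + \<bar>y N\<bar>" "\<bar>e N * y N\<bar> \<le> \<bar>x N\<bar> + \<bar>y N\<bar>" for N
    using assms[of N] mult_left_le_one_le[of "\<bar>x N\<bar>" "\<bar>e N\<bar>"]
      mult_left_le_one_le[of "\<bar>y N\<bar>" "\<bar>e N\<bar>"]
    by (auto simp: abs_mult intro: add_increasing add_increasing2)
  then have "summable (\<lambda>N. e N * x N)" "summable (\<lambda>N. e N * y N)"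
    by (auto intro: summable_comparison_test'[OF summable_abs_xy])
  then have sx: "(\<lambda>N. e N * x N) sums (\<Sum>N. e N * x N)"
    and sy: "(\<lambda>N. e N * y N) sums (\<Sum>N. e N * y N)"
    by (simp_all add: summable_sums)
  show "(\<lambda>N. e N *\<^sub>R (x N, y N)) sums (\<Sum>N. e N * x N, \<Sum>N. e N * y N)"
    using sums_Pair[OF sx sy] by simp
  show "(\<lambda>n. block_value e n * a n) sums (\<Sum>N. e N * x N)"
    using sums_group[OF sx, of "Suc m"] unfolding sum_block
    by (simp add: block_value_def x_block sum_distrib_right mult.assoc del: mult_Suc_right)
  show "(\<lambda>n. block_balance e n * r ^ n) sums (\<Sum>N. e N * y N)"
    using sums_group[OF sy, of "Suc m"] unfolding sum_block
    by (simp add: block_balance_def y_block sum_distrib_right left_diff_distrib del: mult_Suc_right)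
qed

lemma block_balance_eq_0:
  assumes e: "\<And>N. e N \<in> {0, 1}" and y0: "(\<Sum>N. e N * y N) = 0"
  shows "block_balance e n = 0"
proof (rule int_coeffs_eq_0_if_sums_zero)
  have e01: "0 \<le> e N" "e N \<le> 1" for N
    using e[of N] by auto
  have "e N \<in> \<int>" for N
    using e[of N] by auto
  then show "block_balance e n \<in> \<int>" for n
    unfolding block_balance_def by (intro Ints_diff Ints_sum) auto
  show "\<bar>block_balance e n\<bar> \<le> real m + 1" for n
  proof -
    have "(\<Sum>j<m. e (n * Suc m + j)) \<le> real m"
      using sum_mono[of "{..<m}" "\<lambda>j. e (n * Suc m + j)" "\<lambda>_. 1"] e01 by simp
    moreover have "0 \<le> (\<Sum>j<m. e (n * Suc m + j))"
      using e01 by (simp add: sum_nonneg)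
    ultimately show ?thesis
      unfolding block_balance_def abs_le_iff using e01[of "n * Suc m + m"] by linarith
  qed
  show "(\<lambda>n. block_balance e n * r ^ n) sums 0"
    using selection_sums(3)[of e] e01 y0 by (simp add: abs_le_iff)
  show "0 < r" by (rule r_pos)
  show "(real m + 1) * r < 1 - r"
    by (simp add: r_def field_simps)
qed

lemma block_value_mem:
  assumes e: "\<And>N. e N \<in> {0, 1}" and "block_balance e n = 0"
  shows "block_value e n \<in> insert 0 (set ps)"
proof -
  have "(\<Sum>j<m. e (n * Suc m + j)) \<le> 1"
    using assms(2) e[of "n * Suc m + m"] unfolding block_balance_def by auto
  then have "block_value e n \<in> insert 0 ((!) ps ` {..<m})"
    unfolding block_value_def using e by (intro sum_select_at_most_one) auto
  also have "(!) ps ` {..<m} = set ps"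
    by (auto simp: in_set_conv_nth)
  finally show ?thesis .
qed

lemma block_encoding:
  assumes "\<And>n. \<epsilon> n \<in> insert 0 (set ps)"
  obtains e where "\<And>N. e N \<in> {0, 1}"
    and "\<And>n. block_value e n = \<epsilon> n" and "\<And>n. block_balance e n = 0"
proof
  define e :: "nat \<Rightarrow> real" where
    "e N = (if N mod Suc m < m then of_bool (\<epsilon> (N div Suc m) = ps ! (N mod Suc m))
            else of_bool (\<epsilon> (N div Suc m) \<noteq> 0))" for N
  show "e N \<in> {0, 1}" for N
    by (simp add: e_def)
  have e_block: "j < m \<Longrightarrow> e (n * Suc m + j) = of_bool (\<epsilon> n = ps ! j)"
    "e (n * Suc m + m) = of_bool (\<epsilon> n \<noteq> 0)" for n j
    by (simp_all add: e_def del: mult_Suc_right)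
  fix n
  have "block_value e n = \<epsilon> n \<and> block_balance e n = 0"
  proof (cases "\<epsilon> n = 0")
    case True
    then show ?thesis
      by (auto simp: block_value_def block_balance_def e_block nth_ps_neq_0 simp del: mult_Suc_right)
  next
    case False
    then obtain j0 where j0: "j0 < m" "\<epsilon> n = ps ! j0"
      using assms[of n] by (auto simp: in_set_conv_nth)
    then have "e (n * Suc m + j) = of_bool (j = j0)" if "j < m" for j
      using that e_block(1) nth_eq_iff_index_eq[OF distinct_ps] by auto
    then show ?thesis
      using j0 False by (simp add: block_value_def block_balance_def e_block(2) of_bool_def
          if_distrib[of "\<lambda>c. c * _"] cong: if_cong del: mult_Suc_right)
  qed
  then show "block_value e n = \<epsilon> n" "block_balance e n = 0"
    by simp_all
qed

lemma section_achievement_set: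
  "section_at (achievement_set (\<lambda>N. (x N, y N))) 0 = P_sums (insert 0 (set ps)) a"
proof (intro equalityI subsetI)
  fix z
  assume "z \<in> section_at (achievement_set (\<lambda>N. (x N, y N))) 0"
  then obtain e where e: "\<And>N. e N \<in> {0, 1}" and z: "(z, 0) = (\<Sum>N. e N *\<^sub>R (x N, y N))"
    unfolding section_at_def achievement_set_def by auto
  have e1: "\<bar>e N\<bar> \<le> 1" for N
    using e[of N] by auto
  have "(z, 0) = (\<Sum>N. e N * x N, \<Sum>N. e N * y N)"
    unfolding z by (rule sums_unique[OF selection_sums(1)[of e, OF e1], symmetric])
  then have zx: "z = (\<Sum>N. e N * x N)" and y0: "(\<Sum>N. e N * y N) = 0"
    by simp_all
  have "(\<lambda>n. block_value e n * a n) sums z"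
    using selection_sums(2)[of e, OF e1] zx by simp
  moreover have "block_value e n \<in> insert 0 (set ps)" for n
    using block_value_mem[OF e block_balance_eq_0[OF e y0]] .
  ultimately show "z \<in> P_sums (insert 0 (set ps)) a"
    unfolding P_sums_def by (blast dest: sums_unique)
next
  fix z
  assume "z \<in> P_sums (insert 0 (set ps)) a"
  then obtain \<epsilon> where \<epsilon>: "\<And>n. \<epsilon> n \<in> insert 0 (set ps)" and z: "z = (\<Sum>n. \<epsilon> n * a n)"
    unfolding P_sums_def by auto
  obtain e where e: "\<And>N. e N \<in> {0, 1}"
    and e_value: "\<And>n. block_value e n = \<epsilon> n" and e_balance: "\<And>n. block_balance e n = 0"
    using block_encoding[of \<epsilon>, OF \<epsilon>] by metis
  have e1: "\<bar>e N\<bar> \<le> 1" for N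
    using e[of N] by auto
  have "z = (\<Sum>N. e N * x N)"
    using sums_unique[OF selection_sums(2)[of e, OF e1]] z e_value by simp
  moreover have "(\<Sum>N. e N * y N) = 0"
    using sums_unique[OF selection_sums(3)[of e, OF e1]] e_balance by simp
  ultimately have "(z, 0) = (\<Sum>N. e N *\<^sub>R (x N, y N))"
    using sums_unique[OF selection_sums(1)[of e, OF e1]] by simp
  then show "z \<in> section_at (achievement_set (\<lambda>N. (x N, y N))) 0"
    unfolding section_at_def achievement_set_def using e by blast
qed

end

theorem theorem4p1:
  fixes P :: "real set" and a :: "nat \<Rightarrow> real"
  assumes "finite P" and "0 \<in> P"
    and "summable (\<lambda>n. \<bar>a n\<bar>)"
    and "\<forall>n. \<bar>a n\<bar> \<ge> \<bar>a (Suc n)\<bar> \<and> \<bar>a (Suc n)\<bar> > 0"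
  shows "\<exists>x y :: nat \<Rightarrow> real. summable (\<lambda>n. \<bar>x n\<bar> + \<bar>y n\<bar>) \<and>
           section_at (achievement_set (\<lambda>n. (x n, y n))) 0 = P_sums P a"
proof -
  define ps where "ps = sorted_list_of_set (P - {0})"
  have "set ps = P - {0}" and "distinct ps"
    using assms(1) by (simp_all add: ps_def)
  then interpret P_sums_encoding ps a
    using assms(3) by unfold_locales auto
  have "insert 0 (set ps) = P"
    using \<open>set ps = P - {0}\<close> assms(2) by auto
  then show ?thesis
    using summable_abs_xy section_achievement_set by blast
qed

end
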